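(* Let $\varepsilon>0$ and let $f(t)=\sum_{n=0}^\infty a_nt^n$ for $-\varepsilon<t<\varepsilon$ be analytic, with $\{a_n\}\subset\mathbb{R}$. Let $\rho_N(x)=|x+e_N|_N^2-1$ for $x\in\mathbb{R}^N$, where $e_N=(0,\ldots,0,1)$ (so $f\circ\rho_N$ is defined and smooth on a neighbourhood of $0$). (i) If $N=1$ and $k\in\mathbb{Z}_+$, then $$[f(\rho_1)]^{(k)}(0)=k!\sum_{n=\lceil k/2\rceil}^k2^{2n-k}a_n\binom{n}{k-n}.$$ (ii) If $N\in\mathbb{N}\setminus\{1\}$ and $k\in\mathbb{Z}_+$, then $$|\nabla_N^k[f(\rho_N)](0)|_{N^k}^2=k!\sum_{l=0}^{\lfloor k/2\rfloor}\frac{(k-2l)!}{(2l)!}\Bigl(\sum_{n=\lceil k/2\rceil}^{k-l}2^{2n-k}a_n\binom{n}{k-n}\binom{k-n}{l}\Bigr)^2\gamma_{N-1}^{2l,2l}.$$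
   Context: For $M\in\mathbb{N}$: $|x|_M$ is the Euclidean norm on $\mathbb{R}^M$, $I_M=\{1,\ldots,M\}$, $D_i=\partial_{x_{i_1}}\cdots\partial_{x_{i_k}}$ for $i\in I_M^k$, $|\nabla_M^k u(x)|_{M^k}^2=\sum_{i\in I_M^k}(D_iu(x))^2$ (for $k=0$ this is $u(x)^2$). For $k\in\mathbb{Z}_+$, $s\in\mathbb{R}$, $\gamma_M^{s,k}$ denotes the constant value of $(|x|_M^{k-s}|\nabla_M^k[|x|_M^s]|_{M^k})^2$ on $\mathbb{R}^M\setminus\{0\}$ (it is known to be constant). $\binom{n}{j}=(n)_j/j!$ with $(n)_j=\prod_{i=0}^{j-1}(n-i)$, $(n)_0=1$. *)

theory Defs
  imports "HOL-Analysis.Analysis"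
begin

text \<open>Points of R^M are modelled as functions nat => real; only the coordinates
  0..M-1 are used (coordinate j of the paper is index j-1 here).\<close>

definition pdiff :: "nat \<Rightarrow> ((nat \<Rightarrow> real) \<Rightarrow> real) \<Rightarrow> (nat \<Rightarrow> real) \<Rightarrow> real" where
  "pdiff i u x = deriv (\<lambda>t. u (x(i := x i + t))) 0"

fun Dlist :: "nat list \<Rightarrow> ((nat \<Rightarrow> real) \<Rightarrow> real) \<Rightarrow> (nat \<Rightarrow> real) \<Rightarrow> real" where
  "Dlist [] u = u"
| "Dlist (i # is) u = pdiff i (Dlist is u)"

definition gradnorm2 :: "nat \<Rightarrow> nat \<Rightarrow> ((nat \<Rightarrow> real) \<Rightarrow> real) \<Rightarrow> (nat \<Rightarrow> real) \<Rightarrow> real" where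
  "gradnorm2 M k u x = (\<Sum>is\<in>{is. length is = k \<and> set is \<subseteq> {..<M}}. (Dlist is u x)\<^sup>2)"

definition enorm :: "nat \<Rightarrow> (nat \<Rightarrow> real) \<Rightarrow> real" where
  "enorm M x = sqrt (\<Sum>j<M. (x j)\<^sup>2)"

definition gamma :: "nat \<Rightarrow> real \<Rightarrow> nat \<Rightarrow> real" where
  "gamma M s k = (THE c. \<forall>x. (\<forall>j\<ge>M. x j = 0) \<and> (\<exists>j<M. x j \<noteq> 0) \<longrightarrow>
      (enorm M x powr (real k - s))\<^sup>2 * gradnorm2 M k (\<lambda>y. enorm M y powr s) x = c)"

definition rho :: "nat \<Rightarrow> (nat \<Rightarrow> real) \<Rightarrow> real" where
  "rho N x = (\<Sum>j<N. (x j + (if j = N - 1 then 1 else 0))\<^sup>2) - 1"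

end

theory Submission
  imports Defs "HOL-Computational_Algebra.Polynomial"
begin

text \<open>
  For \<open>r(x) = |x + s|\<^sup>2 + d\<close>, every iterated partial derivative \<open>D\<^sub>i\<^sub>s f(r(x))\<close> has the form
  \<open>\<Sum>\<^sub>j f\<^sup>(\<^sup>j\<^sup>)(r(x)) c\<^sub>j\<close>. One more derivative in coordinate \<open>i\<close> either hits some \<open>f\<^sup>(\<^sup>j\<^sup>)\<close>, which
  raises \<open>j\<close> by one and multiplies by \<open>2(x\<^sub>i + s\<^sub>i)\<close>, or hits a coefficient \<open>c\<^sub>j\<close>. Read as a
  polynomial in a formal variable, \<open>\<Sum>\<^sub>j c\<^sub>j T\<^sup>j\<close> is therefore the product over the distinct
  coordinates of Hermite-type polynomials \<open>H\<^sub>n(y)\<close>, where \<open>n\<close> is the multiplicity of the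
  coordinate and \<open>y = x\<^sub>i + s\<^sub>i\<close>; their coefficients are \<open>n!/((2j-n)! (n-j)!) (2y)\<^sup>2\<^sup>j\<^sup>-\<^sup>n\<close>.
  At the origin \<open>r = 0\<close> and \<open>f\<^sup>(\<^sup>j\<^sup>)(0) = j! a\<^sub>j\<close>.

  Part (i) is the single factor \<open>H\<^sub>k(1)\<close>. For \<open>\<rho>\<^sub>N\<close> only the last coordinate has \<open>y = 1\<close>; all
  others have \<open>y = 0\<close>, where \<open>H\<^sub>n(0)\<close> is a monomial of degree \<open>n/2\<close> (zero for odd \<open>n\<close>). A
  multi-index with \<open>m\<close> entries off the last coordinate thus contributes a weight depending on
  those entries times a coefficient sum depending only on \<open>m\<close>. There are \<open>k choose m\<close>
  placements of these entries, odd \<open>m\<close> contribute nothing, and the sum of the squared weights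
  is what differentiating \<open>|x|\<^sup>2\<^sup>l\<close> \<open>2l\<close> times produces, namely \<open>\<gamma>\<^sub>N\<^sub>-\<^sub>1\<^sup>2\<^sup>l\<^sup>,\<^sup>2\<^sup>l / (l!)\<^sup>2\<close>.
\<close>

section \<open>Coefficients of polynomial products\<close>

lemma coeff_prod_eq_0_below_half:
  fixes p :: "'b \<Rightarrow> 'a::comm_semiring_1 poly"
  assumes "finite S" and "\<And>m j. m \<in> S \<Longrightarrow> 2*j < n m \<Longrightarrow> coeff (p m) j = 0"
    and "2*j < (\<Sum>m\<in>S. n m)"
  shows "coeff (\<Prod>m\<in>S. p m) j = 0"
  using assms
proof (induction S arbitrary: j rule: finite_induct)
  case (insert a S)
  have "coeff (p a) i * coeff (\<Prod>m\<in>S. p m) (j - i) = 0" if "i \<le> j" for i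
  proof (cases "2*i < n a")
    case False
    then have "2*(j - i) < (\<Sum>m\<in>S. n m)" using insert.prems insert.hyps that by auto
    then show ?thesis using insert by simp
  qed (use insert in simp)
  then show ?case using insert.hyps by (simp add: coeff_mult)
qed simp

lemma coeff_prod_cong_at_half:
  fixes p q :: "'b \<Rightarrow> 'a::comm_semiring_1 poly"
  assumes "finite S"
    and "\<And>m j. m \<in> S \<Longrightarrow> 2*j < n m \<Longrightarrow> coeff (p m) j = 0"
    and "\<And>m j. m \<in> S \<Longrightarrow> 2*j < n m \<Longrightarrow> coeff (q m) j = 0"
    and "\<And>m j. m \<in> S \<Longrightarrow> 2*j = n m \<Longrightarrow> coeff (p m) j = coeff (q m) j"
    and "2*j = (\<Sum>m\<in>S. n m)"
  shows "coeff (\<Prod>m\<in>S. p m) j = coeff (\<Prod>m\<in>S. q m) j"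
  using assms
proof (induction S arbitrary: j rule: finite_induct)
  case (insert a S)
  have "coeff (p a) i * coeff (\<Prod>m\<in>S. p m) (j - i) = coeff (q a) i * coeff (\<Prod>m\<in>S. q m) (j - i)"
    if "i \<le> j" for i
  proof (cases "2*i < n a \<or> 2*(j - i) < (\<Sum>m\<in>S. n m)")
    case True
    with insert show ?thesis
      using coeff_prod_eq_0_below_half[of S n p "j - i"] coeff_prod_eq_0_below_half[of S n q "j - i"]
      by auto
  next
    case False
    then have "2*i = n a" "2*(j - i) = (\<Sum>m\<in>S. n m)" using insert.prems insert.hyps that by auto
    then show ?thesis using insert by simp
  qed
  then show ?case using insert.hyps by (simp add: coeff_mult)
qed simp

lemma sum_coeff_pCons_telescope:
  fixes F :: "nat \<Rightarrow> 'a::comm_ring"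
  assumes "degree p \<le> L"
  shows "(\<Sum>j\<le>Suc L. F (Suc j) * coeff p j + F j * coeff (q - pCons 0 p) j) = (\<Sum>j\<le>Suc L. F j * coeff q j)"
proof -
  have "(\<Sum>j\<le>Suc L. F (Suc j) * coeff p j) = (\<Sum>j\<le>L. F (Suc j) * coeff p j)"
    using assms by (simp add: coeff_eq_0)
  also have "\<dots> = (\<Sum>j\<le>Suc L. F j * coeff (pCons 0 p) j)"
    by (simp only: sum.atMost_Suc_shift coeff_pCons_0 coeff_pCons_Suc mult_zero_right add_0)
  finally show ?thesis
    by (simp add: sum.distrib sum_subtractf right_diff_distrib)
qed

section \<open>Derivatives of a power series\<close>

definition powser_deriv :: "(nat \<Rightarrow> real) \<Rightarrow> nat \<Rightarrow> real \<Rightarrow> real" where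
  "powser_deriv a j t = (\<Sum>n. (diffs ^^ j) a n * t ^ n)"

lemma powser_deriv_has_real_derivative:
  assumes "\<And>t. norm t < e \<Longrightarrow> summable (\<lambda>n. a n * t ^ n)" and "norm t < e"
  shows "(powser_deriv a j has_real_derivative powser_deriv a (Suc j) t) (at t)"
proof -
  have "summable (\<lambda>n. (diffs ^^ j) a n * t ^ n)" if "norm t < e" for t j
    using that by (induction j arbitrary: t) (auto intro: assms(1) termdiff_converges)
  then show ?thesis
    unfolding powser_deriv_def using termdiffs_strong'[of e "(diffs ^^ j) a" t] assms(2) by simp
qed

lemma powser_deriv_0: "powser_deriv a j 0 = fact j * a j"
proof -
  have "(diffs ^^ j) a n = pochhammer (real (Suc n)) j * a (n + j)" for n
    by (induction j arbitrary: n) (simp_all add: diffs_def pochhammer_rec algebra_simps)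
  then show ?thesis
    unfolding powser_deriv_def using powser_zero[of "(diffs ^^ j) a"] by (simp add: pochhammer_fact)
qed

section \<open>Iterated derivatives of a function of a square\<close>

text \<open>\<open>(d/dy)\<^sup>n F(y\<^sup>2) = (\<Sum>j\<le>n. sq_chain_coeff n j y * F\<^sup>(\<^sup>j\<^sup>)(y\<^sup>2))\<close>: Hermite-type coefficients,
  collected as the polynomial \<open>sq_chain_poly n y\<close> in a formal variable standing for the order of
  the derivative of \<open>F\<close>.\<close>

definition sq_chain_coeff :: "nat \<Rightarrow> nat \<Rightarrow> real \<Rightarrow> real" where
  "sq_chain_coeff n j y =
     (if n \<le> 2*j \<and> j \<le> n then fact n / (fact (2*j - n) * fact (n - j)) * (2*y) ^ (2*j - n) else 0)"

definition sq_chain_poly :: "nat \<Rightarrow> real \<Rightarrow> real poly" where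
  "sq_chain_poly n y = (\<Sum>j\<le>n. monom (sq_chain_coeff n j y) j)"

lemma coeff_sq_chain_poly [simp]: "coeff (sq_chain_poly n y) j = sq_chain_coeff n j y"
  by (auto simp: sq_chain_poly_def coeff_sum coeff_monom sq_chain_coeff_def)

lemma sq_chain_coeff_0 [simp]: "sq_chain_coeff n 0 y = (if n = 0 then 1 else 0)"
  by (simp add: sq_chain_coeff_def)

lemma sq_chain_poly_0_eq_1 [simp]: "sq_chain_poly 0 y = 1"
  by (simp add: sq_chain_poly_def sq_chain_coeff_def)

lemma sq_chain_coeff_Suc_Suc:
  "sq_chain_coeff (Suc m) (Suc i) y = 2*y * sq_chain_coeff m i y + 2 * real m * sq_chain_coeff (m - 1) i y"
proof -
  consider "m < i" | "i = m" | "2*i + 1 < m" | "m = 2*i + 1" | "m \<le> 2*i" "i < m" by linarith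
  then show ?thesis
  proof cases
    case 4
    have "fact (2*i + 2) / fact (i + 1) = 2 * real (2*i + 1) * (fact (2*i) / fact i :: real)"
      by (simp add: fact_Suc field_simps del: of_nat_Suc) (simp add: algebra_simps)
    with 4 show ?thesis by (simp add: sq_chain_coeff_def)
  next
    case 5
    define p where "p = 2*i - m"
    define q where "q = m - i"
    have m: "m = p + 2*q" and i: "i = p + q" and "q \<ge> 1" using 5 by (auto simp: p_def q_def)
    then obtain r where q: "q = Suc r" using not0_implies_Suc by fastforce
    define A where "A = fact m / (fact (Suc p) * fact q) * (2*y) ^ Suc p"
    have "sq_chain_coeff (Suc m) (Suc i) y = real (Suc m) * A"
      by (simp add: sq_chain_coeff_def A_def m i)
    moreover have "2*y * sq_chain_coeff m i y = real (Suc p) * A"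
      by (simp add: sq_chain_coeff_def A_def m i divide_simps)
    moreover have "2 * real m * sq_chain_coeff (m - 1) i y = 2 * real q * A"
      by (simp add: sq_chain_coeff_def A_def m i q divide_simps) (simp add: algebra_simps)
    ultimately show ?thesis by (simp add: m algebra_simps)
  qed (auto simp: sq_chain_coeff_def)
qed

lemma sq_chain_poly_Suc:
  "sq_chain_poly (Suc n) y =
     pCons 0 (smult (2*y) (sq_chain_poly n y) + smult (2 * real n) (sq_chain_poly (n - 1) y))"
  by (rule poly_eqI) (auto simp: coeff_pCons sq_chain_coeff_Suc_Suc split: nat.split)

lemma sq_chain_coeff_has_real_derivative:
  "((\<lambda>y. sq_chain_coeff n j y) has_real_derivative
     coeff (pCons 0 (smult (2 * real n) (sq_chain_poly (n - 1) y))) j) (at y)"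
proof (cases j)
  case (Suc i)
  show ?thesis
  proof (cases "n < 2*j \<and> j \<le> n")
    case True
    then obtain e where e: "2*j - n = Suc e" "2*i - (n - 1) = e" "n - 1 - i = n - j" and "n \<ge> 1"
      using Suc by (intro that[of "2*j - n - 1"]) auto
    define c :: real where "c = fact n / (fact (Suc e) * fact (n - j))"
    have K: "sq_chain_coeff n j = (\<lambda>y. c * 2 ^ Suc e * y ^ Suc e)"
      using True e by (auto simp: sq_chain_coeff_def c_def power_mult_distrib)
    have "n - 1 \<le> 2*i \<and> i \<le> n - 1" using True Suc by auto
    have "((\<lambda>y. c * 2 ^ Suc e * y ^ Suc e) has_real_derivative c * 2 ^ Suc e * (real (Suc e) * y ^ e)) (at y)"
      using DERIV_cmult[OF DERIV_pow[of "Suc e"], of "c * 2 ^ Suc e"] by simp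
    also have "c * 2 ^ Suc e * (real (Suc e) * y ^ e) = 2 * real n * sq_chain_coeff (n - 1) i y"
      using e \<open>n \<ge> 1\<close> \<open>n - 1 \<le> 2*i \<and> i \<le> n - 1\<close>
      by (simp add: sq_chain_coeff_def c_def fact_reduce[of n] power_mult_distrib divide_simps)
    finally show ?thesis
      unfolding Suc K[unfolded Suc] by (simp only: coeff_pCons_Suc coeff_smult coeff_sq_chain_poly)
  next
    case False
    then have "sq_chain_coeff n (Suc i) = (\<lambda>_. if n = 2*j then fact n / fact j else 0)"
      and "2 * real n * sq_chain_coeff (n - 1) i y = 0"
      using Suc by (auto simp: sq_chain_coeff_def)
    then show ?thesis
      unfolding Suc coeff_pCons_Suc coeff_smult coeff_sq_chain_poly by (simp only: DERIV_const)
  qed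
qed simp

lemma degree_sq_chain_poly: "degree (sq_chain_poly n y) \<le> n"
  by (rule degree_le) (simp add: sq_chain_coeff_def)

lemma degree_sq_chain_poly_0: "degree (sq_chain_poly n 0) \<le> n div 2"
  by (rule degree_le) (auto simp: sq_chain_coeff_def)

lemma sq_chain_coeff_below_half: "2*j < n \<Longrightarrow> sq_chain_coeff n j y = 0"
  by (simp add: sq_chain_coeff_def)

lemma sq_chain_coeff_half: "2*j = n \<Longrightarrow> sq_chain_coeff n j y = sq_chain_coeff n j 0"
  by (auto simp: sq_chain_coeff_def)

lemma sum_fact_coeff_monom_sq_chain_poly:
  fixes a :: "nat \<Rightarrow> real"
  assumes "2*l \<le> k"
  shows "(\<Sum>j\<le>k. fact j * a j * coeff (monom 1 l * sq_chain_poly (k - 2*l) 1) j) =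
    fact l * fact (k - 2*l) *
      (\<Sum>n=(k+1) div 2..k-l. 2 ^ (2*n - k) * a n * real (n choose (k - n)) * real ((k - n) choose l))"
proof -
  define T where "T = (\<lambda>j. fact j * a j * coeff (monom 1 l * sq_chain_poly (k - 2*l) 1) j)"
  have "T j = 0" if "j \<in> {..k} - {(k+1) div 2..k-l}" for j
    using that assms by (auto simp: T_def coeff_monom_mult sq_chain_coeff_def)
  then have "(\<Sum>j\<le>k. T j) = (\<Sum>j=(k+1) div 2..k-l. T j)"
    by (intro sum.mono_neutral_right) auto
  also have "\<dots> = (\<Sum>n=(k+1) div 2..k-l. fact l * fact (k - 2*l) *
      (2 ^ (2*n - k) * a n * real (n choose (k - n)) * real ((k - n) choose l)))"
  proof (rule sum.cong[OF refl])
    fix j assume "j \<in> {(k+1) div 2..k-l}"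
    then have "k \<le> 2*j" "j \<le> k - l" using assms by auto
    moreover have "k - 2*l \<le> 2*(j - l) \<and> j - l \<le> k - 2*l" "l \<le> j"
      "2*(j - l) - (k - 2*l) = 2*j - k" "k - 2*l - (j - l) = k - l - j"
      using calculation assms by auto
    ultimately have T_j: "T j = fact j * a j * (fact (k - 2*l) / (fact (2*j - k) * fact (k - l - j)) * 2 ^ (2*j - k))"
      by (simp add: T_def coeff_monom_mult sq_chain_coeff_def)
    have choose_1: "real (j choose (k - j)) = fact j / (fact (k - j) * fact (2*j - k))"
    proof -
      have "j - (k - j) = 2*j - k" "k - j \<le> j" using \<open>k \<le> 2*j\<close> \<open>j \<le> k - l\<close> by auto
      then show ?thesis using binomial_fact[of "k - j" j] by simp
    qed
    have choose_2: "real ((k - j) choose l) = fact (k - j) / (fact l * fact (k - l - j))"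
    proof -
      have "l \<le> k - j" using \<open>j \<le> k - l\<close> assms by auto
      then show ?thesis using binomial_fact[of l "k - j"] by (simp add: algebra_simps)
    qed
    show "T j = fact l * fact (k - 2*l) *
        (2 ^ (2*j - k) * a j * real (j choose (k - j)) * real ((k - j) choose l))"
      unfolding T_j choose_1 choose_2 by (simp add: field_simps)
  qed
  finally show ?thesis by (simp add: T_def sum_distrib_left)
qed

section \<open>Partial derivatives of a function of a squared norm\<close>

text \<open>The analogue for \<open>F(|y|\<^sup>2)\<close> and the partial derivative \<open>D\<^sub>i\<^sub>s\<close>: the squares of the distinct
  coordinates in \<open>is\<close> contribute independently, so the coefficient polynomial factorises.\<close>

definition norm_chain_poly :: "nat list \<Rightarrow> (nat \<Rightarrow> real) \<Rightarrow> real poly" where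
  "norm_chain_poly is y = (\<Prod>m\<in>set is. sq_chain_poly (count_list is m) (y m))"

lemma norm_chain_poly_remove:
  "norm_chain_poly is y =
     sq_chain_poly (count_list is i) (y i) * (\<Prod>m\<in>set is - {i}. sq_chain_poly (count_list is m) (y m))"
proof (cases "i \<in> set is")
  case False
  then show ?thesis by (simp add: norm_chain_poly_def count_list_0_iff)
qed (simp add: norm_chain_poly_def prod.remove)

lemma norm_chain_poly_replicate: "norm_chain_poly (replicate k i) y = sq_chain_poly k (y i)"
proof -
  have count: "count_list (replicate k i) i = k" by (induction k) auto
  have rest: "set (replicate k i) - {i} = {}" by auto
  show ?thesis unfolding norm_chain_poly_remove[of "replicate k i" y i] count rest by simp
qed

lemma degree_norm_chain_poly: "degree (norm_chain_poly is y) \<le> length is"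
proof -
  have "degree (norm_chain_poly is y) \<le> (\<Sum>m\<in>set is. degree (sq_chain_poly (count_list is m) (y m)))"
    unfolding norm_chain_poly_def by (rule degree_prod_sum_le[unfolded comp_def]) simp
  also have "\<dots> \<le> (\<Sum>m\<in>set is. count_list is m)"
    by (rule sum_mono) (rule degree_sq_chain_poly)
  also have "\<dots> = length is" by (rule sum_count_set) auto
  finally show ?thesis .
qed

lemma coeff_norm_chain_poly_above: "length is < j \<Longrightarrow> coeff (norm_chain_poly is y) j = 0"
  using degree_norm_chain_poly[of "is" y] by (simp add: coeff_eq_0)

lemma coeff_norm_chain_poly_below_half: "2*j < length is \<Longrightarrow> coeff (norm_chain_poly is y) j = 0"
  unfolding norm_chain_poly_def
  by (rule coeff_prod_eq_0_below_half[where n = "count_list is"])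
     (simp_all add: sq_chain_coeff_below_half sum_count_set)

lemma degree_norm_chain_poly_0: "degree (norm_chain_poly is (\<lambda>_. 0)) \<le> length is div 2"
proof -
  have "degree (norm_chain_poly is (\<lambda>_. 0)) \<le> (\<Sum>m\<in>set is. degree (sq_chain_poly (count_list is m) 0))"
    unfolding norm_chain_poly_def by (rule degree_prod_sum_le[unfolded comp_def]) simp
  also have "\<dots> \<le> (\<Sum>m\<in>set is. count_list is m div 2)"
    by (rule sum_mono) (rule degree_sq_chain_poly_0)
  also have "\<dots> \<le> (\<Sum>m\<in>set is. count_list is m) div 2"
  proof -
    have "2 * (\<Sum>m\<in>set is. count_list is m div 2) \<le> (\<Sum>m\<in>set is. count_list is m)"
      unfolding sum_distrib_left by (rule sum_mono) simp
    then show ?thesis by simp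
  qed
  also have "\<dots> = length is div 2" by (simp add: sum_count_set)
  finally show ?thesis .
qed

definition pairing_weight :: "nat list \<Rightarrow> real" where
  "pairing_weight is = coeff (norm_chain_poly is (\<lambda>_. 0)) (length is div 2)"

lemma norm_chain_poly_0: "norm_chain_poly is (\<lambda>_. 0) = monom (pairing_weight is) (length is div 2)"
proof (rule poly_eqI)
  fix j
  consider "2*j < length is" | "length is div 2 < j" | "j = length is div 2" by linarith
  then show "coeff (norm_chain_poly is (\<lambda>_. 0)) j = coeff (monom (pairing_weight is) (length is div 2)) j"
  proof cases
    case 1
    then show ?thesis
      using coeff_norm_chain_poly_below_half[of j "is"] by (auto simp: coeff_monom pairing_weight_def)
  next
    case 2
    then show ?thesis using degree_norm_chain_poly_0[of "is"] by (simp add: coeff_eq_0 coeff_monom)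
  qed (simp add: pairing_weight_def)
qed

lemma pairing_weight_odd: "odd (length is) \<Longrightarrow> pairing_weight is = 0"
  unfolding pairing_weight_def by (rule coeff_norm_chain_poly_below_half) presburger

lemma coeff_norm_chain_poly_half:
  assumes "2*j = length is"
  shows "coeff (norm_chain_poly is y) j = pairing_weight is"
proof -
  have "coeff (norm_chain_poly is y) j = coeff (norm_chain_poly is (\<lambda>_. 0)) j"
    unfolding norm_chain_poly_def
  proof (rule coeff_prod_cong_at_half[where n = "count_list is"])
    show "2*j = (\<Sum>m\<in>set is. count_list is m)" using assms by (simp add: sum_count_set)
  qed (auto simp: sq_chain_coeff_below_half intro: sq_chain_coeff_half)
  then show ?thesis using assms[symmetric] by (simp add: pairing_weight_def)
qed

lemma norm_chain_poly_unit:
  "norm_chain_poly is (\<lambda>m. if m = i then 1 else 0) =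
     sq_chain_poly (count_list is i) 1 * norm_chain_poly (filter (\<lambda>m. m \<noteq> i) is) (\<lambda>_. 0)"
proof -
  have "count_list (filter (\<lambda>m. m \<noteq> i) is) m = count_list is m" if "m \<noteq> i" for m
    using that by (induction "is") auto
  then have "(\<Prod>m\<in>set is - {i}. sq_chain_poly (count_list is m) (if m = i then 1 else 0)) =
      norm_chain_poly (filter (\<lambda>m. m \<noteq> i) is) (\<lambda>_. 0)"
    unfolding norm_chain_poly_def by (intro prod.cong) auto
  then show ?thesis by (subst norm_chain_poly_remove[of _ _ i]) simp
qed

lemma norm_chain_poly_Cons:
  "norm_chain_poly (i # is) y =
     pCons 0 (smult (2 * y i) (norm_chain_poly is y))
     + pCons 0 (smult (2 * real (count_list is i)) (sq_chain_poly (count_list is i - 1) (y i)))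
       * (\<Prod>m\<in>set is - {i}. sq_chain_poly (count_list is m) (y m))"
proof -
  have "(\<Prod>m\<in>set (i # is) - {i}. sq_chain_poly (count_list (i # is) m) (y m)) =
      (\<Prod>m\<in>set is - {i}. sq_chain_poly (count_list is m) (y m))"
    by (intro prod.cong) auto
  then show ?thesis
    by (simp add: norm_chain_poly_remove[of _ _ i] sq_chain_poly_Suc algebra_simps)
qed

lemma norm_chain_poly_coeff_has_real_derivative:
  "((\<lambda>t. coeff (norm_chain_poly is (y(i := y i + t))) j) has_real_derivative
     coeff (norm_chain_poly (i # is) y - pCons 0 (smult (2 * y i) (norm_chain_poly is y))) j) (at 0)"
proof -
  define n where "n = count_list is i"
  define R where "R = (\<Prod>m\<in>set is - {i}. sq_chain_poly (count_list is m) (y m))"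
  have "(\<Prod>m\<in>set is - {i}. sq_chain_poly (count_list is m) ((y(i := y i + t)) m)) = R" for t
    unfolding R_def by (intro prod.cong) auto
  then have R: "norm_chain_poly is (y(i := y i + t)) = sq_chain_poly n (y i + t) * R" for t
    unfolding norm_chain_poly_remove[of _ _ i] n_def by simp
  have "((\<lambda>t. sq_chain_coeff n a (y i + t)) has_real_derivative
      coeff (pCons 0 (smult (2 * real n) (sq_chain_poly (n - 1) (y i)))) a) (at 0)" for a
    using DERIV_shift[of "sq_chain_coeff n a" _ 0 "y i"] sq_chain_coeff_has_real_derivative[of n a "y i"]
    by (simp add: add.commute)
  then have "((\<lambda>t. coeff (sq_chain_poly n (y i + t) * R) j) has_real_derivative
      coeff (pCons 0 (smult (2 * real n) (sq_chain_poly (n - 1) (y i))) * R) j) (at 0)"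
    unfolding coeff_mult by (intro DERIV_sum DERIV_cmult_right) simp
  then show ?thesis
    unfolding R norm_chain_poly_Cons n_def R_def by simp
qed

definition shifted_sqnorm :: "nat \<Rightarrow> (nat \<Rightarrow> real) \<Rightarrow> real \<Rightarrow> (nat \<Rightarrow> real) \<Rightarrow> real" where
  "shifted_sqnorm N s d x = (\<Sum>j<N. (x j + s j)\<^sup>2) + d"

lemma shifted_sqnorm_upd:
  assumes "i < N"
  shows "shifted_sqnorm N s d (x(i := x i + t)) = shifted_sqnorm N s d x + 2*t*(x i + s i) + t\<^sup>2"
proof -
  have "(\<Sum>j<N. ((x(i := x i + t)) j + s j)\<^sup>2) = (x i + t + s i)\<^sup>2 + (\<Sum>j\<in>{..<N} - {i}. (x j + s j)\<^sup>2)"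
    and "(\<Sum>j<N. (x j + s j)\<^sup>2) = (x i + s i)\<^sup>2 + (\<Sum>j\<in>{..<N} - {i}. (x j + s j)\<^sup>2)"
    using assms by (simp_all add: sum.remove)
  then show ?thesis unfolding shifted_sqnorm_def by (simp add: power2_eq_square algebra_simps)
qed

lemma sum_norm_chain_poly_has_real_derivative:
  fixes F :: "nat \<Rightarrow> real \<Rightarrow> real"
  assumes F: "\<And>j t. t \<in> I \<Longrightarrow> (F j has_real_derivative F (Suc j) t) (at t)" and "r \<in> I"
  shows "((\<lambda>t. \<Sum>j\<le>Suc (length is). F j (r + 2*t*y i + t\<^sup>2) * coeff (norm_chain_poly is (y(i := y i + t))) j)
    has_real_derivative (\<Sum>j\<le>Suc (length is). F j r * coeff (norm_chain_poly (i # is) y) j)) (at 0)"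
proof -
  define L where "L = length is"
  define p where "p = smult (2 * y i) (norm_chain_poly is y)"
  define q where "q = norm_chain_poly (i # is) y"
  have "((\<lambda>t. \<Sum>j\<le>Suc L. F j (r + 2*t*y i + t\<^sup>2) * coeff (norm_chain_poly is (y(i := y i + t))) j)
      has_real_derivative (\<Sum>j\<le>Suc L. F (Suc j) r * coeff p j + F j r * coeff (q - pCons 0 p) j)) (at 0)"
  proof (rule DERIV_sum)
    fix j
    have "((\<lambda>t. r + 2*t*y i + t\<^sup>2) has_real_derivative 2 * y i) (at 0)"
      by (auto intro!: derivative_eq_intros)
    then have dF: "((\<lambda>t. F j (r + 2*t*y i + t\<^sup>2)) has_real_derivative F (Suc j) r * (2 * y i)) (at 0)"
      using DERIV_chain2[OF F, of "\<lambda>t. r + 2*t*y i + t\<^sup>2" 0] \<open>r \<in> I\<close> by simp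
    have dP: "((\<lambda>t. coeff (norm_chain_poly is (y(i := y i + t))) j) has_real_derivative
        coeff (q - pCons 0 p) j) (at 0)"
      using norm_chain_poly_coeff_has_real_derivative[of "is" y i j] by (simp add: p_def q_def)
    show "((\<lambda>t. F j (r + 2*t*y i + t\<^sup>2) * coeff (norm_chain_poly is (y(i := y i + t))) j) has_real_derivative
        F (Suc j) r * coeff p j + F j r * coeff (q - pCons 0 p) j) (at 0)"
      using DERIV_mult[OF dF dP]
      by (simp add: p_def mult.assoc mult.commute[of _ "F j r"] del: coeff_diff)
  qed
  moreover have "degree p \<le> L"
    using degree_norm_chain_poly[of "is"] by (simp add: p_def L_def)
  ultimately show ?thesis
    using sum_coeff_pCons_telescope[of p L "\<lambda>j. F j r" q] by (simp add: L_def q_def)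
qed

lemma Dlist_comp_shifted_sqnorm:
  fixes F :: "nat \<Rightarrow> real \<Rightarrow> real" and f :: "real \<Rightarrow> real"
  assumes I: "open I"
    and F: "\<And>j t. t \<in> I \<Longrightarrow> (F j has_real_derivative F (Suc j) t) (at t)"
    and f: "\<And>t. t \<in> I \<Longrightarrow> f t = F 0 t"
    and "set is \<subseteq> {..<N}" and "shifted_sqnorm N s d x \<in> I"
  shows "Dlist is (\<lambda>x. f (shifted_sqnorm N s d x)) x =
    (\<Sum>j\<le>length is. F j (shifted_sqnorm N s d x) * coeff (norm_chain_poly is (\<lambda>m. x m + s m)) j)"
  using assms(4,5)
proof (induction "is" arbitrary: x)
  case Nil
  then show ?case by (simp add: f norm_chain_poly_def)
next
  case (Cons i "is")
  have "i < N" and is_N: "set is \<subseteq> {..<N}" using Cons.prems by auto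
  define u where "u = (\<lambda>x. f (shifted_sqnorm N s d x))"
  define y where "y = (\<lambda>m. x m + s m)"
  define r where "r = shifted_sqnorm N s d x"
  define g where "g = (\<lambda>t::real. r + 2*t*y i + t\<^sup>2)"
  define G where "G = (\<lambda>t. \<Sum>j\<le>Suc (length is). F j (g t) * coeff (norm_chain_poly is (y(i := y i + t))) j)"
  have Dlist_G: "Dlist is u (x(i := x i + t)) = G t" if "g t \<in> I" for t
  proof -
    have r_upd: "shifted_sqnorm N s d (x(i := x i + t)) = g t"
      unfolding g_def r_def y_def by (rule shifted_sqnorm_upd[OF \<open>i < N\<close>])
    have y_upd: "(\<lambda>m. (x(i := x i + t)) m + s m) = y(i := y i + t)" by (auto simp: y_def)
    have "Dlist is u (x(i := x i + t)) =
        (\<Sum>j\<le>length is. F j (g t) * coeff (norm_chain_poly is (y(i := y i + t))) j)"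
      using Cons.IH[OF is_N, of "x(i := x i + t)", unfolded r_upd y_upd] that unfolding u_def by blast
    then show ?thesis by (simp add: G_def coeff_norm_chain_poly_above)
  qed
  have open_S: "open (g -` I)" unfolding g_def
    by (rule continuous_open_vimage[OF I]) (intro continuous_intros)
  have S_0: "0 \<in> g -` I" using Cons.prems by (simp add: g_def r_def)
  have "(G has_real_derivative (\<Sum>j\<le>Suc (length is). F j r * coeff (norm_chain_poly (i # is) y) j)) (at 0)"
    unfolding G_def g_def
    using sum_norm_chain_poly_has_real_derivative[where F = F and I = I, OF F] Cons.prems
    by (simp add: r_def)
  then have "((\<lambda>t. Dlist is u (x(i := x i + t))) has_real_derivative
      (\<Sum>j\<le>Suc (length is). F j r * coeff (norm_chain_poly (i # is) y) j)) (at 0)"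
    by (rule has_field_derivative_transform_within_open[OF _ open_S S_0]) (simp add: Dlist_G)
  then have "deriv (\<lambda>t. Dlist is u (x(i := x i + t))) 0 =
      (\<Sum>j\<le>Suc (length is). F j r * coeff (norm_chain_poly (i # is) y) j)"
    by (rule DERIV_imp_deriv)
  then show ?case by (simp add: pdiff_def u_def y_def r_def)
qed

lemma Dlist_powser_comp_shifted_sqnorm:
  fixes a :: "nat \<Rightarrow> real" and f :: "real \<Rightarrow> real"
  assumes "\<epsilon> > 0" and f: "\<forall>t. -\<epsilon> < t \<and> t < \<epsilon> \<longrightarrow> (\<lambda>n. a n * t ^ n) sums f t"
    and "set is \<subseteq> {..<N}" and "shifted_sqnorm N s d x = 0"
  shows "Dlist is (\<lambda>x. f (shifted_sqnorm N s d x)) x =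
    (\<Sum>j\<le>length is. fact j * a j * coeff (norm_chain_poly is (\<lambda>m. x m + s m)) j)"
proof -
  have "(\<lambda>n. a n * t ^ n) sums f t" if "norm t < \<epsilon>" for t
    using f that by (simp add: abs_less_iff)
  then have summable: "summable (\<lambda>n. a n * t ^ n)" and f_eq: "f t = powser_deriv a 0 t"
    if "norm t < \<epsilon>" for t
    using that by (auto simp: powser_deriv_def sums_iff)
  have "Dlist is (\<lambda>x. f (shifted_sqnorm N s d x)) x =
      (\<Sum>j\<le>length is. powser_deriv a j 0 * coeff (norm_chain_poly is (\<lambda>m. x m + s m)) j)"
    using Dlist_comp_shifted_sqnorm[where I = "ball 0 \<epsilon>" and F = "powser_deriv a"]
      powser_deriv_has_real_derivative[OF summable] f_eq assms(1,3,4)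
    by simp
  then show ?thesis by (simp add: powser_deriv_0)
qed

lemma Dlist_sqnorm_power:
  assumes "length is = 2*l" and "set is \<subseteq> {..<M}"
  shows "Dlist is (\<lambda>y. (shifted_sqnorm M (\<lambda>_. 0) 0 y) ^ l) x = fact l * pairing_weight is"
proof -
  define F where "F = (\<lambda>j (t::real). (\<Prod>i<j. real (l - i)) * t ^ (l - j))"
  have "(F j has_real_derivative F (Suc j) t) (at t)" for j t
    using DERIV_cmult[OF DERIV_pow[of "l - j" t], of "\<Prod>i<j. real (l - i)"]
    by (simp add: F_def algebra_simps)
  then have "Dlist is (\<lambda>y. (shifted_sqnorm M (\<lambda>_. 0) 0 y) ^ l) x =
      (\<Sum>j\<le>2*l. F j (shifted_sqnorm M (\<lambda>_. 0) 0 x) * coeff (norm_chain_poly is x) j)"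
    using Dlist_comp_shifted_sqnorm[where I = UNIV and F = F and f = "\<lambda>t. t ^ l"] assms
    by (simp add: F_def)
  also have "\<dots> = (\<Sum>j\<le>2*l. if j = l then fact l * pairing_weight is else 0)"
  proof (rule sum.cong[OF refl])
    fix j
    consider "j < l" | "j = l" | "l < j" by linarith
    then show "F j (shifted_sqnorm M (\<lambda>_. 0) 0 x) * coeff (norm_chain_poly is x) j =
        (if j = l then fact l * pairing_weight is else 0)"
    proof cases
      case 1
      then show ?thesis using coeff_norm_chain_poly_below_half[of j "is"] assms(1) by simp
    next
      case 2
      then show ?thesis using coeff_norm_chain_poly_half[of j "is"] assms(1)
        by (simp add: F_def fact_prod_rev atLeast0LessThan)
    next
      case 3
      then show ?thesis by (auto simp: F_def intro: prod_zero)
    qed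
  qed
  finally show ?thesis by simp
qed

section \<open>Part (i): one dimension\<close>

lemma Dlist_replicate_0: "Dlist (replicate k 0) (\<lambda>v. h (v 0)) v = (deriv ^^ k) h (v 0)"
proof (induction k arbitrary: v)
  case (Suc k)
  have "deriv (\<lambda>t. (deriv ^^ k) h (v 0 + t)) 0 = deriv ((deriv ^^ k) h) (v 0)"
    using DERIV_shift[of "(deriv ^^ k) h" _ 0 "v 0"] by (simp add: deriv_def add.commute)
  then show ?case using Suc by (simp add: pdiff_def)
qed simp

lemma deriv_funpow_powser_comp_shifted_square:
  fixes a :: "nat \<Rightarrow> real" and f :: "real \<Rightarrow> real"
  assumes "\<epsilon> > 0" and "\<forall>t. -\<epsilon> < t \<and> t < \<epsilon> \<longrightarrow> (\<lambda>n. a n * t ^ n) sums f t"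
  shows "(deriv ^^ k) (\<lambda>x. f ((x + 1)\<^sup>2 - 1)) 0 =
    fact k * (\<Sum>n=(k+1) div 2..k. 2 ^ (2*n - k) * a n * real (n choose (k - n)))"
proof -
  have "(deriv ^^ k) (\<lambda>x. f ((x + 1)\<^sup>2 - 1)) 0 =
      Dlist (replicate k 0) (\<lambda>v. f (shifted_sqnorm 1 (\<lambda>_. 1) (-1) v)) (\<lambda>_. 0)"
    using Dlist_replicate_0[of k "\<lambda>x. f ((x + 1)\<^sup>2 - 1)" "\<lambda>_. 0"] by (simp add: shifted_sqnorm_def)
  also have "\<dots> = (\<Sum>j\<le>k. fact j * a j * coeff (monom 1 0 * sq_chain_poly (k - 2*0) 1) j)"
    using Dlist_powser_comp_shifted_sqnorm[OF assms, of "replicate k 0" 1 "\<lambda>_. 1" "-1" "\<lambda>_. 0"]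
    by (simp add: shifted_sqnorm_def norm_chain_poly_replicate set_replicate_conv_if)
  also have "\<dots> = fact k * (\<Sum>n=(k+1) div 2..k. 2 ^ (2*n - k) * a n * real (n choose (k - n)))"
    by (subst sum_fact_coeff_monom_sq_chain_poly) simp_all
  finally show ?thesis .
qed

section \<open>Part (ii): higher dimensions\<close>

definition multi_indices :: "nat \<Rightarrow> nat \<Rightarrow> nat list set" where
  "multi_indices M k = {is. length is = k \<and> set is \<subseteq> {..<M}}"

lemma gradnorm2_multi_indices: "gradnorm2 M k u x = (\<Sum>is\<in>multi_indices M k. (Dlist is u x)\<^sup>2)"
  by (simp add: gradnorm2_def multi_indices_def)

lemma multi_indices_0 [simp]: "multi_indices M 0 = {[]}"
  by (auto simp: multi_indices_def)

lemma sum_multi_indices_Suc: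
  "(\<Sum>is\<in>multi_indices M (Suc k). g is) = (\<Sum>i<M. \<Sum>is\<in>multi_indices M k. g (i # is))"
proof -
  have "multi_indices M (Suc k) = (\<lambda>(i, is). i # is) ` ({..<M} \<times> multi_indices M k)"
    by (auto simp: multi_indices_def image_iff length_Suc_conv)
  moreover have "inj_on (\<lambda>(i, is). i # is) ({..<M} \<times> multi_indices M k)"
    by (auto simp: inj_on_def)
  ultimately show ?thesis
    using sum.reindex[of "\<lambda>(i, is). i # is" "{..<M} \<times> multi_indices M k" g]
    by (simp add: sum.cartesian_product split_beta comp_def)
qed

lemma sum_multi_indices_filter:
  fixes \<phi> :: "nat list \<Rightarrow> real"
  shows "(\<Sum>is\<in>multi_indices (Suc M) k. \<phi> (filter (\<lambda>m. m \<noteq> M) is)) =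
    (\<Sum>m\<le>k. real (k choose m) * (\<Sum>is\<in>multi_indices M m. \<phi> is))"
proof (induction k arbitrary: \<phi>)
  case (Suc k)
  define S where "S = (\<lambda>m (\<phi> :: nat list \<Rightarrow> real). \<Sum>is\<in>multi_indices M m. \<phi> is)"
  define \<psi> where "\<psi> = (\<lambda>is. \<Sum>i<M. \<phi> (i # is))"
  have S_\<psi>: "S m \<psi> = S (Suc m) \<phi>" for m
    unfolding S_def \<psi>_def sum_multi_indices_Suc by (rule sum.swap)
  have "(\<Sum>is\<in>multi_indices (Suc M) (Suc k). \<phi> (filter (\<lambda>m. m \<noteq> M) is)) =
      (\<Sum>is\<in>multi_indices (Suc M) k. \<phi> (filter (\<lambda>m. m \<noteq> M) is)) +
      (\<Sum>is\<in>multi_indices (Suc M) k. \<psi> (filter (\<lambda>m. m \<noteq> M) is))"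
    unfolding sum_multi_indices_Suc \<psi>_def by (simp add: sum.swap[of _ "{..<M}"])
  also have "\<dots> = (\<Sum>m\<le>k. real (k choose m) * S m \<phi>) + (\<Sum>m\<le>k. real (k choose m) * S (Suc m) \<phi>)"
    using Suc.IH[of \<phi>] Suc.IH[of \<psi>] S_\<psi> unfolding S_def by simp
  also have "\<dots> = (\<Sum>m\<le>Suc k. real (Suc k choose m) * S m \<phi>)"
  proof -
    have "(\<Sum>m\<le>k. real (k choose m) * S m \<phi>) = (\<Sum>m\<le>Suc k. real (k choose m) * S m \<phi>)"
      by simp
    also have "\<dots> = S 0 \<phi> + (\<Sum>m\<le>k. real (k choose Suc m) * S (Suc m) \<phi>)"
      by (simp add: sum.atMost_Suc_shift del: sum.atMost_Suc)
    finally show ?thesis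
      by (simp add: sum.atMost_Suc_shift sum.distrib[symmetric] algebra_simps del: sum.atMost_Suc)
  qed
  finally show ?case unfolding S_def .
qed simp

lemma sqrt_powr_even:
  assumes "S \<ge> 0" and "l \<noteq> 0"
  shows "sqrt S powr real (2*l) = S ^ l"
proof (cases "S = 0")
  case False
  with assms have "sqrt S powr real (2*l) = sqrt S ^ (2*l)" by (intro powr_realpow) simp
  also have "\<dots> = S ^ l" using assms by (simp add: power_mult)
  finally show ?thesis .
qed (use assms in simp)

lemma Dlist_enorm_powr_even:
  assumes "enorm M x \<noteq> 0" and "length is = 2*l" and "set is \<subseteq> {..<M}"
  shows "Dlist is (\<lambda>y. enorm M y powr real (2*l)) x = fact l * pairing_weight is"
proof (cases "l = 0")
  case True
  \<comment> \<open>\<open>0 powr 0 = 0\<close>, so the function is the constant 1 only away from the origin\<close>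
  then show ?thesis
    using assms by (simp add: pairing_weight_def norm_chain_poly_def)
next
  case False
  have "enorm M y powr real (2*l) = (shifted_sqnorm M (\<lambda>_. 0) 0 y) ^ l" for y
    using sqrt_powr_even[of "\<Sum>j<M. (y j)\<^sup>2" l] False by (simp add: enorm_def shifted_sqnorm_def sum_nonneg)
  then have "(\<lambda>y. enorm M y powr real (2*l)) = (\<lambda>y. (shifted_sqnorm M (\<lambda>_. 0) 0 y) ^ l)" by simp
  then show ?thesis using Dlist_sqnorm_power assms(2,3) by simp
qed

lemma gamma_even:
  assumes "M \<ge> 1"
  shows "gamma M (real (2*l)) (2*l) = fact l ^ 2 * (\<Sum>is\<in>multi_indices M (2*l). (pairing_weight is)\<^sup>2)"
proof -
  define c where "c = fact l ^ 2 * (\<Sum>is\<in>multi_indices M (2*l). (pairing_weight is)\<^sup>2)"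
  define h where "h = (\<lambda>y. enorm M y powr real (2*l))"
  have gamma_value: "(enorm M x powr (real (2*l) - real (2*l)))\<^sup>2 * gradnorm2 M (2*l) h x = c"
    if "\<exists>j<M. x j \<noteq> 0" for x
  proof -
    from that obtain j where "j < M" "x j \<noteq> 0" by blast
    then have "(\<Sum>j<M. (x j)\<^sup>2) > 0" by (intro sum_pos2[of _ j]) auto
    then have "enorm M x \<noteq> 0" by (simp add: enorm_def)
    then have "Dlist is h x = fact l * pairing_weight is" if "is \<in> multi_indices M (2*l)" for "is"
      using that Dlist_enorm_powr_even by (simp add: h_def multi_indices_def)
    then have "gradnorm2 M (2*l) h x = c"
      by (simp add: gradnorm2_multi_indices c_def power_mult_distrib sum_distrib_left)
    then show ?thesis using \<open>enorm M x \<noteq> 0\<close> by simp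
  qed
  define e :: "nat \<Rightarrow> real" where "e = (\<lambda>j. if j = 0 then 1 else 0)"
  have e: "(\<forall>j\<ge>M. e j = 0) \<and> (\<exists>j<M. e j \<noteq> 0)" using assms by (auto simp: e_def)
  show ?thesis
    unfolding gamma_def h_def[symmetric] c_def[symmetric]
  proof (rule the_equality)
    fix c' assume "\<forall>x. (\<forall>j\<ge>M. x j = 0) \<and> (\<exists>j<M. x j \<noteq> 0) \<longrightarrow>
        (enorm M x powr (real (2*l) - real (2*l)))\<^sup>2 * gradnorm2 M (2*l) h x = c'"
    then show "c' = c" using gamma_value e by metis
  qed (use gamma_value in blast)
qed

lemma sum_atMost_odd_vanish:
  fixes h :: "nat \<Rightarrow> 'a::comm_monoid_add"
  assumes "\<And>m. odd m \<Longrightarrow> h m = 0"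
  shows "(\<Sum>m\<le>k. h m) = (\<Sum>l\<le>k div 2. h (2*l))"
proof -
  have "(\<Sum>l\<le>k div 2. h (2*l)) = (\<Sum>m\<in>(\<lambda>l. 2*l) ` {..k div 2}. h m)"
    by (simp add: sum.reindex inj_on_def)
  also have "\<dots> = (\<Sum>m\<le>k. h m)"
  proof (rule sum.mono_neutral_left)
    show "\<forall>m\<in>{..k} - (\<lambda>l. 2*l) ` {..k div 2}. h m = 0"
    proof
      fix m assume m: "m \<in> {..k} - (\<lambda>l. 2*l) ` {..k div 2}"
      have "odd m"
      proof
        assume "even m"
        then obtain l where "m = 2*l" by blast
        then show False using m by auto
      qed
      then show "h m = 0" by (rule assms)
    qed
  qed auto
  finally show ?thesis ..
qed

lemma Dlist_powser_comp_rho: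
  fixes a :: "nat \<Rightarrow> real" and f :: "real \<Rightarrow> real"
  assumes "\<epsilon> > 0" and "\<forall>t. -\<epsilon> < t \<and> t < \<epsilon> \<longrightarrow> (\<lambda>n. a n * t ^ n) sums f t"
    and N: "N = Suc M" and "is \<in> multi_indices N k"
  defines "is' \<equiv> filter (\<lambda>m. m \<noteq> M) is"
  shows "Dlist is (\<lambda>x. f (rho N x)) (\<lambda>_. 0) = pairing_weight is' *
    (\<Sum>j\<le>k. fact j * a j * coeff (monom 1 (length is' div 2) * sq_chain_poly (k - length is') 1) j)"
proof -
  define e :: "nat \<Rightarrow> real" where "e = (\<lambda>m. if m = M then 1 else 0)"
  have rho: "rho N = shifted_sqnorm N e (-1)"
    by (auto simp: rho_def shifted_sqnorm_def e_def N)
  have rho_0: "shifted_sqnorm N e (-1) (\<lambda>_. 0) = 0"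
    by (simp add: shifted_sqnorm_def e_def N power2_eq_square)
  have "length is = k" and is_N: "set is \<subseteq> {..<N}" using assms(4) by (auto simp: multi_indices_def)
  moreover have "length is' + count_list is M = length is"
    unfolding is'_def by (induction "is") auto
  ultimately have count: "count_list is M = k - length is'" by simp
  have "norm_chain_poly is e =
      smult (pairing_weight is') (monom 1 (length is' div 2) * sq_chain_poly (k - length is') 1)"
    unfolding e_def norm_chain_poly_unit norm_chain_poly_0 count is'_def
    by (simp add: smult_monom mult.commute flip: mult_smult_right)
  then have "Dlist is (\<lambda>x. f (rho N x)) (\<lambda>_. 0) =
      (\<Sum>j\<le>k. fact j * a j * coeff (smult (pairing_weight is')
        (monom 1 (length is' div 2) * sq_chain_poly (k - length is') 1)) j)"
    using Dlist_powser_comp_shifted_sqnorm[OF assms(1,2) is_N rho_0] \<open>length is = k\<close>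
    by (simp add: rho)
  then show ?thesis by (simp add: sum_distrib_left algebra_simps)
qed

lemma gradnorm2_powser_comp_rho:
  fixes a :: "nat \<Rightarrow> real" and f :: "real \<Rightarrow> real"
  assumes "\<epsilon> > 0" and "\<forall>t. -\<epsilon> < t \<and> t < \<epsilon> \<longrightarrow> (\<lambda>n. a n * t ^ n) sums f t"
    and "N \<ge> 2"
  shows "gradnorm2 N k (\<lambda>x. f (rho N x)) (\<lambda>_. 0) =
    fact k * (\<Sum>l=0..k div 2. (fact (k - 2*l) / fact (2*l)) *
      (\<Sum>n=(k+1) div 2..k - l. 2 ^ (2*n - k) * a n * real (n choose (k - n)) * real ((k - n) choose l))\<^sup>2
      * gamma (N - 1) (real (2*l)) (2*l))"
proof -
  define M where "M = N - 1"
  have N: "N = Suc M" and "M \<ge> 1" using assms(3) by (auto simp: M_def)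
  define V where "V = (\<lambda>m. \<Sum>j\<le>k. fact j * a j * coeff (monom 1 (m div 2) * sq_chain_poly (k - m) 1) j)"
  define W where "W = (\<lambda>m. \<Sum>is\<in>multi_indices M m. (pairing_weight is)\<^sup>2)"
  have "gradnorm2 N k (\<lambda>x. f (rho N x)) (\<lambda>_. 0) =
      (\<Sum>is\<in>multi_indices (Suc M) k. (\<lambda>is'. (pairing_weight is' * V (length is'))\<^sup>2) (filter (\<lambda>m. m \<noteq> M) is))"
    unfolding gradnorm2_multi_indices N V_def
    by (intro sum.cong refl) (simp add: Dlist_powser_comp_rho[OF assms(1,2) refl])
  also have "\<dots> = (\<Sum>m\<le>k. real (k choose m) *
      (\<Sum>is\<in>multi_indices M m. (pairing_weight is * V (length is))\<^sup>2))"
    by (rule sum_multi_indices_filter)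
  also have "\<dots> = (\<Sum>m\<le>k. real (k choose m) * ((V m)\<^sup>2 * W m))"
    unfolding W_def
    by (intro sum.cong refl) (simp add: multi_indices_def power_mult_distrib sum_distrib_left mult.commute)
  also have "\<dots> = (\<Sum>l\<le>k div 2. real (k choose (2*l)) * ((V (2*l))\<^sup>2 * W (2*l)))"
    by (rule sum_atMost_odd_vanish) (simp add: W_def multi_indices_def pairing_weight_odd)
  also have "\<dots> = (\<Sum>l\<le>k div 2. fact k * ((fact (k - 2*l) / fact (2*l)) *
      (\<Sum>n=(k+1) div 2..k - l. 2 ^ (2*n - k) * a n * real (n choose (k - n)) * real ((k - n) choose l))\<^sup>2
      * gamma (N - 1) (real (2*l)) (2*l)))"
  proof (intro sum.cong refl)
    fix l assume "l \<in> {..k div 2}"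
    then have "2*l \<le> k" by auto
    then show "real (k choose (2*l)) * ((V (2*l))\<^sup>2 * W (2*l)) = fact k * ((fact (k - 2*l) / fact (2*l)) *
      (\<Sum>n=(k+1) div 2..k - l. 2 ^ (2*n - k) * a n * real (n choose (k - n)) * real ((k - n) choose l))\<^sup>2
      * gamma (N - 1) (real (2*l)) (2*l))"
      using sum_fact_coeff_monom_sq_chain_poly[of l k a] gamma_even[OF \<open>M \<ge> 1\<close>, of l]
      by (simp add: V_def W_def M_def binomial_fact field_simps power2_eq_square)
  qed
  finally show ?thesis by (simp add: sum_distrib_left atLeast0AtMost)
qed

theorem proposition3p6:
  fixes \<epsilon> :: real and a :: "nat \<Rightarrow> real" and f :: "real \<Rightarrow> real"
  assumes "\<epsilon> > 0"
    and "\<forall>t. -\<epsilon> < t \<and> t < \<epsilon> \<longrightarrow> (\<lambda>n. a n * t ^ n) sums f t"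
  shows "(\<forall>k::nat. (deriv ^^ k) (\<lambda>x. f ((x + 1)\<^sup>2 - 1)) 0 =
            fact k * (\<Sum>n=(k+1) div 2..k. 2 ^ (2*n - k) * a n * real (n choose (k - n))))
       \<and> (\<forall>N::nat. \<forall>k::nat. N \<ge> 2 \<longrightarrow>
            gradnorm2 N k (\<lambda>x. f (rho N x)) (\<lambda>_. 0) =
            fact k * (\<Sum>l=0..k div 2. (fact (k - 2*l) / fact (2*l)) *
               (\<Sum>n=(k+1) div 2..k - l. 2 ^ (2*n - k) * a n * real (n choose (k - n))
                    * real ((k - n) choose l))\<^sup>2 * gamma (N - 1) (real (2*l)) (2*l)))"
  using deriv_funpow_powser_comp_shifted_square[OF assms] gradnorm2_powser_comp_rho[OF assms]
  by blast

end
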